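(* An $\widehat{\mathrm{FI}}$-module $M$ is an $\mathrm{FI}$-module (i.e. $M$ factors through the functor $\widehat{\mathrm{FI}}\to\mathrm{FI}$) if and only if, for all $n$, the element $(e,2)_n\in\widehat{\mathrm S}_n=\widehat{\mathrm{FI}}(n,n)$ acts trivially on $M_n$.
   Context: $\widehat{\mathrm S}_n=\{(\sigma,d)\in\mathrm S_n\times\mathbb Z: d\text{ odd}\iff\operatorname{sgn}\sigma=-1\}$ for $n\ge2$, trivial for $n=0,1$ (for $n\le1$ the element $(e,2)_n$ is the identity); $(e,2)_n$ is the element $(\mathrm{id},2)$. $\widehat{\mathrm{FI}}$: objects $n\in\mathbb N$, $\widehat{\mathrm{FI}}(n,m)=\widehat{\mathrm S}_m/i_2(\widehat{\mathrm S}_{m-n})$ ($i_1,i_2$ inclusions on first/last letters), composition $([s],[t])\mapsto[t\,i_1(s)]$. $\mathrm{FI}$ is the category of sets $[n]$ and injections, $\mathrm{FI}(n,m)=\mathrm S_m/\mathrm S_{m-n}$, and projection $\widehat{\mathrm S}_m\to\mathrm S_m$ induces a functor $\widehat{\mathrm{FI}}\to\mathrm{FI}$. Modules are functors to abelian groups. *)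

theory Defs
  imports "HOL-Combinatorics.Permutations" "HOL-Algebra.Group"
begin

(* Permutations of [n] = {0..<n}, composed as functions: (s * t) = s o t. *)
type_synonym perm = "nat \<Rightarrow> nat"
type_synonym shat = "perm \<times> int"

definition Sym :: "nat \<Rightarrow> perm set" where
  "Sym n = {\<sigma>. \<sigma> permutes {..<n}}"

(* S-hat_n as a subgroup of S_n x Z (componentwise product); trivial for n <= 1 *)
definition Shat :: "nat \<Rightarrow> shat set" where
  "Shat n = (if n \<le> 1 then {(id, 0)}
             else {(\<sigma>, d). \<sigma> permutes {..<n} \<and> (odd d \<longleftrightarrow> sign \<sigma> = -1)})"

definition shat_mult :: "shat \<Rightarrow> shat \<Rightarrow> shat" where
  "shat_mult s t = (fst s \<circ> fst t, snd s + snd t)"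

definition e2 :: "nat \<Rightarrow> shat" where
  "e2 n = (if n \<le> 1 then (id, 0) else (id, 2))"

(* inclusion on the last letters: permutations of [k] shifted to {m-k..<m} *)
definition shift_perm :: "nat \<Rightarrow> nat \<Rightarrow> perm \<Rightarrow> perm" where
  "shift_perm k m \<sigma> = (\<lambda>j. if j < m - k then j else \<sigma> (j - (m - k)) + (m - k))"

definition i2 :: "nat \<Rightarrow> nat \<Rightarrow> shat \<Rightarrow> shat" where
  "i2 k m s = (shift_perm k m (fst s), snd s)"

(* inclusion on the first letters: S-hat_k -> S-hat_m, k <= m (identity on pairs) *)
definition i1 :: "nat \<Rightarrow> nat \<Rightarrow> shat \<Rightarrow> shat" where
  "i1 k m s = s"

definition si2 :: "nat \<Rightarrow> nat \<Rightarrow> perm \<Rightarrow> perm" where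
  "si2 k m \<sigma> = shift_perm k m \<sigma>"

definition si1 :: "nat \<Rightarrow> nat \<Rightarrow> perm \<Rightarrow> perm" where
  "si1 k m \<sigma> = \<sigma>"

(* the morphism [s] in FI-hat(n,m) = S-hat_m / i2(S-hat_(m-n)) *)
definition FIh_of :: "nat \<Rightarrow> nat \<Rightarrow> shat \<Rightarrow> shat set" where
  "FIh_of n m s = (\<lambda>h. shat_mult s h) ` (i2 (m - n) m ` Shat (m - n))"

definition FIh :: "nat \<Rightarrow> nat \<Rightarrow> shat set set" where
  "FIh n m = (if n \<le> m then FIh_of n m ` Shat m else {})"

definition FIh_comp :: "nat \<Rightarrow> nat \<Rightarrow> nat \<Rightarrow> shat set \<Rightarrow> shat set \<Rightarrow> shat set" where
  "FIh_comp n m l f g =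
     FIh_of n l (shat_mult (SOME t. t \<in> g) (i1 m l (SOME s. s \<in> f)))"

definition FIh_id :: "nat \<Rightarrow> shat set" where
  "FIh_id n = FIh_of n n (id, 0)"

definition FI_of :: "nat \<Rightarrow> nat \<Rightarrow> perm \<Rightarrow> perm set" where
  "FI_of n m \<sigma> = (\<lambda>h. \<sigma> \<circ> h) ` (si2 (m - n) m ` Sym (m - n))"

definition FI :: "nat \<Rightarrow> nat \<Rightarrow> perm set set" where
  "FI n m = (if n \<le> m then FI_of n m ` Sym m else {})"

definition FI_comp :: "nat \<Rightarrow> nat \<Rightarrow> nat \<Rightarrow> perm set \<Rightarrow> perm set \<Rightarrow> perm set" where
  "FI_comp n m l f g = FI_of n l ((SOME t. t \<in> g) \<circ> si1 m l (SOME s. s \<in> f))"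

definition FI_id :: "nat \<Rightarrow> perm set" where
  "FI_id n = FI_of n n id"

(* the functor FI-hat -> FI induced by the projection S-hat_m -> S_m *)
definition proj :: "shat set \<Rightarrow> perm set" where
  "proj f = fst ` f"

(* M n is the abelian group M_n (written multiplicatively, HOL-Algebra),
   act n m f is the homomorphism M_n -> M_m assigned to f : n -> m *)
definition FIh_module :: "(nat \<Rightarrow> 'a monoid) \<Rightarrow> (nat \<Rightarrow> nat \<Rightarrow> shat set \<Rightarrow> 'a \<Rightarrow> 'a) \<Rightarrow> bool" where
  "FIh_module M act \<longleftrightarrow>
     (\<forall>n. comm_group (M n)) \<and>
     (\<forall>n m f. f \<in> FIh n m \<longrightarrow> act n m f \<in> hom (M n) (M m)) \<and>
     (\<forall>n. \<forall>x \<in> carrier (M n). act n n (FIh_id n) x = x) \<and>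
     (\<forall>n m l f g. f \<in> FIh n m \<longrightarrow> g \<in> FIh m l \<longrightarrow>
        (\<forall>x \<in> carrier (M n). act n l (FIh_comp n m l f g) x = act m l g (act n m f x)))"

definition FI_module :: "(nat \<Rightarrow> 'a monoid) \<Rightarrow> (nat \<Rightarrow> nat \<Rightarrow> perm set \<Rightarrow> 'a \<Rightarrow> 'a) \<Rightarrow> bool" where
  "FI_module M act \<longleftrightarrow>
     (\<forall>n. comm_group (M n)) \<and>
     (\<forall>n m f. f \<in> FI n m \<longrightarrow> act n m f \<in> hom (M n) (M m)) \<and>
     (\<forall>n. \<forall>x \<in> carrier (M n). act n n (FI_id n) x = x) \<and>
     (\<forall>n m l f g. f \<in> FI n m \<longrightarrow> g \<in> FI m l \<longrightarrow>
        (\<forall>x \<in> carrier (M n). act n l (FI_comp n m l f g) x = act m l g (act n m f x)))"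

definition factors_through_FI :: "(nat \<Rightarrow> 'a monoid) \<Rightarrow> (nat \<Rightarrow> nat \<Rightarrow> shat set \<Rightarrow> 'a \<Rightarrow> 'a) \<Rightarrow> bool" where
  "factors_through_FI M act \<longleftrightarrow>
     (\<exists>actN. FI_module M actN \<and>
        (\<forall>n m f. f \<in> FIh n m \<longrightarrow> (\<forall>x \<in> carrier (M n). act n m f x = actN n m (proj f) x)))"

end

(*
  The projection FI-hat -> FI is the identity on objects, surjective on morphisms and functorial,
  so an FI-hat-module factors through FI iff its action is constant on the fibres of the
  projection. As (e,2)_n projects to the identity of n, this forces (e,2)_n to act trivially. If m - n >= 2, the subgroup i2(S-hat_(m-n)) contains
  the kernel {(id,2k)} of S-hat_m -> S_m, so a coset in FI-hat(n,m) is the full preimage of its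
  image and the fibres are singletons. If m - n <= 1, cosets are single elements (s,d) of S-hat_m,
  and the fibre of (s,d) is {(s,d+2k)} = {(e,2)_m^k (s,d)}, on which a module with trivial
  (e,2)_m-action is constant.
*)
theory Submission
  imports Defs
begin

definition perm_shift :: "nat \<Rightarrow> perm \<Rightarrow> perm" where
  "perm_shift c \<rho> = (\<lambda>j. if j < c then j else \<rho> (j - c) + c)"

lemma shift_perm_eq_perm_shift: "shift_perm k m = perm_shift (m - k)"
  by (rule ext) (simp add: shift_perm_def perm_shift_def)

lemma perm_shift_id [simp]: "perm_shift c id = id"
  by (rule ext) (simp add: perm_shift_def)

lemma perm_shift_comp: "perm_shift c (\<alpha> \<circ> \<beta>) = perm_shift c \<alpha> \<circ> perm_shift c \<beta>"
  by (rule ext) (simp add: perm_shift_def)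

lemma perm_shift_perm_shift: "perm_shift a (perm_shift b \<rho>) = perm_shift (a + b) \<rho>"
  by (rule ext) (auto simp: perm_shift_def)

lemma perm_shift_eq_map_permutation:
  assumes "\<rho> permutes {..<k}"
  shows "perm_shift c \<rho> = map_permutation {..<k} (\<lambda>j. j + c) \<rho>"
proof (rule ext)
  fix j
  have "inj_on (\<lambda>j. j + c) {..<k}" by simp
  show "perm_shift c \<rho> j = map_permutation {..<k} (\<lambda>j. j + c) \<rho> j"
  proof (cases "c \<le> j \<and> j < k + c")
    case True
    then have "j = (j - c) + c" "j - c \<in> {..<k}" by auto
    then show ?thesis
      using map_permutation_apply[OF \<open>inj_on _ _\<close>, of "j - c" \<rho>] by (simp add: perm_shift_def)
  next
    case False
    have "\<rho> (j - c) = j - c" if "c \<le> j" using False that permutes_not_in[OF assms] by auto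
    with False show ?thesis
      by (auto simp: perm_shift_def map_permutation_def restrict_id_def)
  qed
qed

lemma permutes_perm_shift:
  assumes "\<rho> permutes {..<k}"
  shows "perm_shift c \<rho> permutes {..<k + c}"
proof -
  have "bij_betw (\<lambda>j. j + c) {..<k} {c..<k + c}"
    by (rule bij_betw_byWitness[where f' = "\<lambda>j. j - c"]) auto
  then have "perm_shift c \<rho> permutes {c..<k + c}"
    using assms by (simp add: perm_shift_eq_map_permutation map_permutation_permutes)
  then show ?thesis by (rule permutes_subset) auto
qed

lemma sign_perm_shift:
  assumes "\<rho> permutes {..<k}"
  shows "sign (perm_shift c \<rho>) = sign \<rho>"
  using assms by (simp add: perm_shift_eq_map_permutation sign_map_permutation)

lemma perm_shift_commute:
  assumes "\<sigma> permutes {..<c}"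
  shows "perm_shift c \<tau> \<circ> \<sigma> = \<sigma> \<circ> perm_shift c \<tau>"
proof (rule ext)
  fix j
  show "(perm_shift c \<tau> \<circ> \<sigma>) j = (\<sigma> \<circ> perm_shift c \<tau>) j"
  proof (cases "j < c")
    case True
    then show ?thesis using permutes_in_image[OF assms] by (simp add: perm_shift_def)
  next
    case False
    then show ?thesis using permutes_not_in[OF assms] by (simp add: perm_shift_def)
  qed
qed

lemma Sym_trivial: "k \<le> 1 \<Longrightarrow> Sym k = {id}"
  by (cases k) (auto simp: Sym_def lessThan_Suc)

lemma mem_Shat:
  "2 \<le> k \<Longrightarrow> (\<sigma>, d) \<in> Shat k \<longleftrightarrow> \<sigma> permutes {..<k} \<and> (odd d \<longleftrightarrow> sign \<sigma> = -1)"
  by (simp add: Shat_def)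

lemma id_in_Shat: "(id, 0) \<in> Shat k"
  by (simp add: Shat_def permutes_id)

lemma e2_in_Shat: "e2 n \<in> Shat n"
  by (simp add: e2_def Shat_def permutes_id)

lemma shat_mult_id [simp]: "shat_mult s (id, 0) = s"
  by (simp add: shat_mult_def)

lemma shat_mult_closed:
  assumes "s \<in> Shat k" "t \<in> Shat k"
  shows "shat_mult s t \<in> Shat k"
proof (cases "k \<le> 1")
  case True
  then show ?thesis using assms by (simp add: Shat_def)
next
  case False
  obtain \<sigma> d \<tau> e where st: "s = (\<sigma>, d)" "t = (\<tau>, e)" by (cases s, cases t)
  have \<sigma>: "\<sigma> permutes {..<k}" "odd d \<longleftrightarrow> sign \<sigma> = -1"
   and \<tau>: "\<tau> permutes {..<k}" "odd e \<longleftrightarrow> sign \<tau> = -1"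
    using assms False st by (auto simp: Shat_def)
  have "sign (\<sigma> \<circ> \<tau>) = sign \<sigma> * sign \<tau>"
    using \<sigma> \<tau> by (intro sign_compose) (auto simp: permutation_permutes)
  with \<sigma> \<tau> False show ?thesis
    by (cases \<sigma> rule: sign_cases; cases \<tau> rule: sign_cases)
      (auto simp: st shat_mult_def Shat_def permutes_compose)
qed

lemma Shat_mono: "k \<le> l \<Longrightarrow> Shat k \<subseteq> Shat l"
  by (auto simp: Shat_def permutes_id intro: permutes_subset)

lemma fst_Shat: "fst ` Shat k = Sym k"
proof (cases "k \<le> 1")
  case True
  then show ?thesis by (simp add: Shat_def Sym_trivial)
next
  case False
  have "\<sigma> \<in> fst ` Shat k" if "\<sigma> \<in> Sym k" for \<sigma>
  proof -
    have "(\<sigma>, if sign \<sigma> = -1 then 1 else 0) \<in> Shat k"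
      using that False by (auto simp: Shat_def Sym_def)
    then show ?thesis by force
  qed
  with False show ?thesis by (auto simp: Shat_def Sym_def)
qed

lemma i2_in_Shat:
  assumes "k \<le> m" "h \<in> Shat k"
  shows "i2 k m h \<in> Shat m"
proof (cases "k \<le> 1")
  case True
  then show ?thesis
    using assms by (simp add: Shat_def i2_def shift_perm_eq_perm_shift permutes_id)
next
  case False
  obtain \<rho> d where h: "h = (\<rho>, d)" by (cases h)
  have \<rho>: "\<rho> permutes {..<k}" "odd d \<longleftrightarrow> sign \<rho> = -1"
    using assms False h by (auto simp: Shat_def)
  have "perm_shift (m - k) \<rho> permutes {..<m}"
    using permutes_perm_shift[OF \<rho>(1), of "m - k"] assms(1) by simp
  with \<rho> False assms(1) show ?thesis
    by (simp add: h i2_def shift_perm_eq_perm_shift Shat_def sign_perm_shift)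
qed

lemma i2_id [simp]: "i2 k m (id, 0) = (id, 0)"
  by (simp add: i2_def shift_perm_eq_perm_shift)

lemma in_FIh_of_self: "s \<in> FIh_of n m s"
  unfolding FIh_of_def using id_in_Shat by force

lemma FIh_of_subset_Shat: "n \<le> m \<Longrightarrow> s \<in> Shat m \<Longrightarrow> FIh_of n m s \<subseteq> Shat m"
  by (auto simp: FIh_of_def intro!: shat_mult_closed i2_in_Shat)

lemma FIh_of_trivial: "m - n \<le> 1 \<Longrightarrow> FIh_of n m s = {s}"
  by (simp add: FIh_of_def Shat_def)

lemma proj_FIh_of: "proj (FIh_of n m s) = FI_of n m (fst s)"
  by (simp add: proj_def FIh_of_def FI_of_def image_image shat_mult_def i2_def si2_def
      flip: fst_Shat)

lemma mem_FI_of: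
  "n \<le> m \<Longrightarrow> y \<in> FI_of n m \<sigma> \<longleftrightarrow> (\<exists>\<rho> \<in> Sym (m - n). y = \<sigma> \<circ> perm_shift n \<rho>)"
  by (auto simp: FI_of_def si2_def shift_perm_eq_perm_shift)

lemma FI_of_comp_perm_shift:
  assumes "n \<le> m" "\<pi> \<in> Sym (m - n)"
  shows "FI_of n m (\<sigma> \<circ> perm_shift n \<pi>) = FI_of n m \<sigma>"
proof -
  have sub: "FI_of n m (\<sigma> \<circ> perm_shift n \<pi>) \<subseteq> FI_of n m \<sigma>" if "\<pi> \<in> Sym (m - n)" for \<sigma> \<pi>
  proof
    fix y assume "y \<in> FI_of n m (\<sigma> \<circ> perm_shift n \<pi>)"
    then obtain \<rho> where "\<rho> \<in> Sym (m - n)" "y = \<sigma> \<circ> perm_shift n (\<pi> \<circ> \<rho>)"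
      using assms(1) by (auto simp: mem_FI_of perm_shift_comp o_assoc)
    moreover have "\<pi> \<circ> \<rho> \<in> Sym (m - n)"
      using that \<open>\<rho> \<in> Sym (m - n)\<close> by (simp add: Sym_def permutes_compose)
    ultimately show "y \<in> FI_of n m \<sigma>" using assms(1) by (auto simp: mem_FI_of)
  qed
  have "\<pi> permutes {..<m - n}" using assms(2) by (simp add: Sym_def)
  then have "\<sigma> = (\<sigma> \<circ> perm_shift n \<pi>) \<circ> perm_shift n (inv_into UNIV \<pi>)" "inv_into UNIV \<pi> \<in> Sym (m - n)"
    by (simp_all add: comp_assoc Sym_def permutes_inv permutes_inv_o flip: perm_shift_comp)
  then have "FI_of n m \<sigma> \<subseteq> FI_of n m (\<sigma> \<circ> perm_shift n \<pi>)"
    using sub by metis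
  with sub[OF assms(2)] show ?thesis by blast
qed

lemma FI_of_comp_cong:
  assumes "n \<le> m" "m \<le> l" "\<sigma> permutes {..<m}"
    and "a \<in> FI_of m l \<tau>" "b \<in> FI_of n m \<sigma>"
  shows "FI_of n l (a \<circ> b) = FI_of n l (\<tau> \<circ> \<sigma>)"
proof -
  obtain \<pi> \<rho> where \<pi>: "\<pi> permutes {..<l - m}" "a = \<tau> \<circ> perm_shift m \<pi>"
    and \<rho>: "\<rho> permutes {..<m - n}" "b = \<sigma> \<circ> perm_shift n \<rho>"
    using assms by (auto simp: mem_FI_of Sym_def)
  have "a \<circ> b = \<tau> \<circ> (perm_shift m \<pi> \<circ> \<sigma>) \<circ> perm_shift n \<rho>"
    by (simp add: \<pi> \<rho> comp_assoc)
  also have "\<dots> = (\<tau> \<circ> \<sigma>) \<circ> (perm_shift m \<pi> \<circ> perm_shift n \<rho>)"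
    by (simp add: perm_shift_commute[OF assms(3)] comp_assoc)
  also have "\<dots> = (\<tau> \<circ> \<sigma>) \<circ> perm_shift n (perm_shift (m - n) \<pi> \<circ> \<rho>)"
    using assms(1) by (simp add: perm_shift_comp perm_shift_perm_shift)
  finally have "a \<circ> b = (\<tau> \<circ> \<sigma>) \<circ> perm_shift n (perm_shift (m - n) \<pi> \<circ> \<rho>)" .
  moreover have "perm_shift (m - n) \<pi> \<circ> \<rho> \<in> Sym (l - n)"
    using permutes_perm_shift[OF \<pi>(1), of "m - n"] permutes_subset[OF \<rho>(1), of "{..<l - n}"]
      assms(1,2) by (simp add: Sym_def permutes_compose)
  ultimately show ?thesis
    using assms(1,2) FI_of_comp_perm_shift by simp
qed

lemma FIh_of_eq_lifts:
  assumes "n \<le> m" "2 \<le> m - n" "s \<in> Shat m"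
  shows "FIh_of n m s = {x \<in> Shat m. fst x \<in> FI_of n m (fst s)}"
proof
  show "FIh_of n m s \<subseteq> {x \<in> Shat m. fst x \<in> FI_of n m (fst s)}"
    using FIh_of_subset_Shat[OF assms(1,3)] proj_FIh_of[of n m s] by (auto simp: proj_def)
next
  show "{x \<in> Shat m. fst x \<in> FI_of n m (fst s)} \<subseteq> FIh_of n m s"
  proof clarify
    fix \<sigma>' d' assume x: "(\<sigma>', d') \<in> Shat m" "fst (\<sigma>', d') \<in> FI_of n m (fst s)"
    obtain \<sigma> d where s: "s = (\<sigma>, d)" by (cases s)
    obtain \<rho> where \<rho>: "\<rho> permutes {..<m - n}" "\<sigma>' = \<sigma> \<circ> perm_shift n \<rho>"
      using x(2) assms(1) by (auto simp: s mem_FI_of Sym_def)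
    have \<sigma>: "\<sigma> permutes {..<m}" "odd d \<longleftrightarrow> sign \<sigma> = -1"
      and \<sigma>': "odd d' \<longleftrightarrow> sign \<sigma>' = -1"
      using assms x(1) s by (auto simp: mem_Shat)
    have "perm_shift n \<rho> permutes {..<m}"
      using permutes_perm_shift[OF \<rho>(1), of n] assms(1) by simp
    then have "sign \<sigma>' = sign \<sigma> * sign \<rho>"
      using \<rho> \<sigma>(1) sign_compose[of \<sigma> "perm_shift n \<rho>"]
      by (auto simp: permutation_permutes sign_perm_shift)
    then have "(\<rho>, d' - d) \<in> Shat (m - n)"
      using assms(2) \<rho>(1) \<sigma> \<sigma>'
      by (cases \<sigma> rule: sign_cases; cases \<rho> rule: sign_cases) (auto simp: mem_Shat)
    moreover have "(\<sigma>', d') = shat_mult s (i2 (m - n) m (\<rho>, d' - d))"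
      using assms(1) by (simp add: s \<rho>(2) shat_mult_def i2_def shift_perm_eq_perm_shift)
    ultimately show "(\<sigma>', d') \<in> FIh_of n m s"
      by (auto simp: FIh_of_def)
  qed
qed

lemma FIh_memE:
  assumes "f \<in> FIh n m"
  obtains s where "n \<le> m" "s \<in> Shat m" "f = FIh_of n m s"
  using assms by (auto simp: FIh_def split: if_splits)

lemma proj_in_FI: "f \<in> FIh n m \<Longrightarrow> proj f \<in> FI n m"
  by (elim FIh_memE) (auto simp: FI_def proj_FIh_of simp flip: fst_Shat)

lemma proj_onto_FI:
  assumes "F \<in> FI n m"
  obtains f where "f \<in> FIh n m" "proj f = F"
proof -
  obtain \<sigma> where "n \<le> m" "\<sigma> \<in> Sym m" "F = FI_of n m \<sigma>"
    using assms by (auto simp: FI_def split: if_splits)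
  moreover obtain s where "s \<in> Shat m" "\<sigma> = fst s"
    using \<open>\<sigma> \<in> Sym m\<close> by (auto simp flip: fst_Shat)
  ultimately show ?thesis
    using that[of "FIh_of n m s"] by (auto simp: FIh_def proj_FIh_of)
qed

lemma inj_on_proj_FIh:
  assumes "2 \<le> m - n"
  shows "inj_on proj (FIh n m)"
proof (rule inj_onI)
  fix f f' assume "f \<in> FIh n m" "f' \<in> FIh n m" and proj_eq: "proj f = proj f'"
  then obtain s s' where "n \<le> m" "s \<in> Shat m" "f = FIh_of n m s" "s' \<in> Shat m" "f' = FIh_of n m s'"
    by (metis FIh_memE)
  moreover from calculation have "FI_of n m (fst s) = FI_of n m (fst s')"
    using proj_eq by (simp add: proj_FIh_of)
  ultimately show "f = f'"
    using assms by (simp add: FIh_of_eq_lifts)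
qed

lemma FIh_trivial_memE:
  assumes "f \<in> FIh n m" "m - n \<le> 1"
  obtains s where "s \<in> Shat m" "f = {s}"
  using assms by (elim FIh_memE) (auto simp: FIh_of_trivial)

lemma FIh_id_in_FIh: "FIh_id n \<in> FIh n n"
  by (auto simp: FIh_def FIh_id_def id_in_Shat)

lemma proj_FIh_id: "proj (FIh_id n) = FI_id n"
  by (simp add: FIh_id_def FI_id_def proj_FIh_of)

lemma FIh_comp_FIh_of:
  assumes "f \<in> FIh n m" "g \<in> FIh m l"
  obtains s t where "s \<in> f" "t \<in> g" "FIh_comp n m l f g = FIh_of n l (shat_mult t s)"
proof -
  have "f \<noteq> {}" "g \<noteq> {}"
    using assms by (metis FIh_memE empty_iff in_FIh_of_self)+
  then show ?thesis
    using that[of "SOME s. s \<in> f" "SOME t. t \<in> g"] by (simp add: some_in_eq FIh_comp_def i1_def)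
qed

lemma FIh_comp_in_FIh:
  assumes "f \<in> FIh n m" "g \<in> FIh m l"
  shows "FIh_comp n m l f g \<in> FIh n l"
proof -
  obtain s t where "s \<in> f" "t \<in> g" "FIh_comp n m l f g = FIh_of n l (shat_mult t s)"
    using assms by (rule FIh_comp_FIh_of)
  moreover have "n \<le> m" "m \<le> l" "f \<subseteq> Shat m" "g \<subseteq> Shat l"
    using assms by (auto elim!: FIh_memE dest: FIh_of_subset_Shat)
  moreover from calculation have "shat_mult t s \<in> Shat l"
    using Shat_mono[of m l] by (blast intro: shat_mult_closed)
  ultimately show ?thesis
    by (simp add: FIh_def)
qed

lemma proj_FIh_comp:
  assumes "f \<in> FIh n m" "g \<in> FIh m l"
  shows "proj (FIh_comp n m l f g) = FI_comp n m l (proj f) (proj g)"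
proof -
  obtain s0 t0 where "n \<le> m" "s0 \<in> Shat m" "f = FIh_of n m s0"
    and "m \<le> l" "t0 \<in> Shat l" "g = FIh_of m l t0"
    using assms by (elim FIh_memE)
  then have f: "proj f = FI_of n m (fst s0)" and g: "proj g = FI_of m l (fst t0)"
    and "fst s0 permutes {..<m}"
    using fst_Shat[of m] by (force simp: proj_FIh_of Sym_def)+
  then have comp: "FI_of n l (a \<circ> b) = FI_of n l (fst t0 \<circ> fst s0)"
    if "a \<in> proj g" "b \<in> proj f" for a b
    using that FI_of_comp_cong \<open>n \<le> m\<close> \<open>m \<le> l\<close> by auto
  obtain s t where "s \<in> f" "t \<in> g" "FIh_comp n m l f g = FIh_of n l (shat_mult t s)"
    using assms by (rule FIh_comp_FIh_of)
  moreover from calculation have "fst s \<in> proj f" "fst t \<in> proj g"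
    by (auto simp: proj_def)
  ultimately have "proj (FIh_comp n m l f g) = FI_of n l (fst t0 \<circ> fst s0)"
    using comp by (simp add: proj_FIh_of shat_mult_def)
  moreover have "(SOME a. a \<in> proj g) \<in> proj g" "(SOME b. b \<in> proj f) \<in> proj f"
    using \<open>fst s \<in> proj f\<close> \<open>fst t \<in> proj g\<close> by (metis some_in_eq empty_iff)+
  ultimately show ?thesis
    by (simp add: FI_comp_def si1_def comp)
qed

lemma FIh_module_act_in_carrier:
  "FIh_module M act \<Longrightarrow> f \<in> FIh n m \<Longrightarrow> x \<in> carrier (M n) \<Longrightarrow> act n m f x \<in> carrier (M m)"
  unfolding FIh_module_def hom_def by blast

lemma FIh_module_act_comp:
  assumes "FIh_module M act" "f \<in> FIh n m" "g \<in> FIh m l" "x \<in> carrier (M n)"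
  shows "act n l (FIh_comp n m l f g) x = act m l g (act n m f x)"
  using assms unfolding FIh_module_def by blast

lemma act_add_two:
  assumes "FIh_module M act" "n \<le> m" "m - n \<le> 1" "2 \<le> m" "(\<sigma>, d) \<in> Shat m"
    and "x \<in> carrier (M n)"
    and e2: "\<forall>y \<in> carrier (M m). act m m (FIh_of m m (e2 m)) y = y"
  shows "act n m {(\<sigma>, d + 2)} x = act n m {(\<sigma>, d)} x"
proof -
  have "FIh_of n m (\<sigma>, d) \<in> FIh n m"
    using assms(2,5) by (simp add: FIh_def)
  then have f: "{(\<sigma>, d)} \<in> FIh n m"
    by (simp add: FIh_of_trivial[OF assms(3)])
  have g: "FIh_of m m (e2 m) \<in> FIh m m"
    by (simp add: FIh_def e2_in_Shat)
  have "FIh_of m m (e2 m) = {(id, 2)}"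
    using assms(4) by (simp add: FIh_of_trivial e2_def)
  then have "FIh_comp n m m {(\<sigma>, d)} (FIh_of m m (e2 m)) = {(\<sigma>, d + 2)}"
    by (simp add: FIh_comp_def i1_def FIh_of_trivial[OF assms(3)] shat_mult_def)
  then have "act n m {(\<sigma>, d + 2)} x = act m m (FIh_of m m (e2 m)) (act n m {(\<sigma>, d)} x)"
    using FIh_module_act_comp[OF assms(1) f g assms(6)] by simp
  also have "\<dots> = act n m {(\<sigma>, d)} x"
    using e2 FIh_module_act_in_carrier[OF assms(1) f assms(6)] by blast
  finally show ?thesis .
qed

lemma act_add_even:
  fixes k :: int
  assumes "FIh_module M act" "n \<le> m" "m - n \<le> 1" "2 \<le> m" "(\<sigma>, d) \<in> Shat m"
    and "x \<in> carrier (M n)"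
    and e2: "\<forall>y \<in> carrier (M m). act m m (FIh_of m m (e2 m)) y = y"
  shows "act n m {(\<sigma>, d + 2 * k)} x = act n m {(\<sigma>, d)} x"
proof (induction k rule: int_induct[where k = 0])
  case base
  then show ?case by simp
next
  case (step1 i)
  have "(\<sigma>, d + 2 * i) \<in> Shat m" using assms(4,5) by (simp add: mem_Shat)
  then have "act n m {(\<sigma>, d + 2 * i + 2)} x = act n m {(\<sigma>, d + 2 * i)} x"
    by (rule act_add_two[OF assms(1-4) _ assms(6) e2])
  with step1 show ?case by (simp add: distrib_left add.assoc)
next
  case (step2 i)
  have "(\<sigma>, d + 2 * (i - 1)) \<in> Shat m" using assms(4,5) by (simp add: mem_Shat)
  then have "act n m {(\<sigma>, d + 2 * (i - 1) + 2)} x = act n m {(\<sigma>, d + 2 * (i - 1))} x"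
    by (rule act_add_two[OF assms(1-4) _ assms(6) e2])
  with step2 show ?case by (simp add: algebra_simps)
qed

lemma act_eq_if_proj_eq:
  assumes "FIh_module M act"
    and e2: "\<forall>y \<in> carrier (M m). act m m (FIh_of m m (e2 m)) y = y"
    and "f \<in> FIh n m" "f' \<in> FIh n m" "proj f = proj f'" "x \<in> carrier (M n)"
  shows "act n m f x = act n m f' x"
proof (cases "2 \<le> m - n")
  case True
  then show ?thesis using inj_onD[OF inj_on_proj_FIh[OF True] assms(5,3,4)] by simp
next
  case False
  then have "n \<le> m" "m - n \<le> 1" using assms(3) by (auto elim: FIh_memE)
  obtain s s' where s: "s \<in> Shat m" "f = {s}" and s': "s' \<in> Shat m" "f' = {s'}"
    using assms(3,4) \<open>m - n \<le> 1\<close> by (metis FIh_trivial_memE)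
  have fst_eq: "fst s = fst s'" using assms(5) by (simp add: s s' proj_def)
  show ?thesis
  proof (cases "2 \<le> m")
    case False
    then show ?thesis using s s' by (simp add: Shat_def)
  next
    case True
    obtain \<sigma> d d' where sd: "s = (\<sigma>, d)" "s' = (\<sigma>, d')"
      using fst_eq by (metis prod.collapse)
    have "odd d \<longleftrightarrow> odd d'"
      using s(1) s'(1) True by (simp add: sd mem_Shat)
    then have d': "d + 2 * ((d' - d) div 2) = d'"
      by simp
    have "act n m {(\<sigma>, d + 2 * ((d' - d) div 2))} x = act n m {(\<sigma>, d)} x"
      using s(1) by (intro act_add_even[OF assms(1) \<open>n \<le> m\<close> \<open>m - n \<le> 1\<close> True _ assms(6) e2])
        (simp add: sd)
    then show ?thesis
      using s(2) s'(2) by (simp add: sd d')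
  qed
qed

lemma proj_FIh_e2: "proj (FIh_of n n (e2 n)) = FI_id n"
  by (simp add: proj_FIh_of FI_id_def e2_def)

lemma e2_acts_trivially_if_factors_through_FI:
  assumes "factors_through_FI M act" "x \<in> carrier (M n)"
  shows "act n n (FIh_of n n (e2 n)) x = x"
proof -
  obtain actN where N: "FI_module M actN"
    and act: "\<And>n m f x. f \<in> FIh n m \<Longrightarrow> x \<in> carrier (M n) \<Longrightarrow> act n m f x = actN n m (proj f) x"
    using assms(1) unfolding factors_through_FI_def by blast
  have "FIh_of n n (e2 n) \<in> FIh n n"
    by (simp add: FIh_def e2_in_Shat)
  then have "act n n (FIh_of n n (e2 n)) x = actN n n (FI_id n) x"
    using act assms(2) by (simp add: proj_FIh_e2)
  also have "\<dots> = x"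
    using N assms(2) unfolding FI_module_def by blast
  finally show ?thesis .
qed

lemma factors_through_FI_if_act_eq_on_fibres:
  assumes mod: "FIh_module M act"
    and fibre: "\<And>n m f f' x. f \<in> FIh n m \<Longrightarrow> f' \<in> FIh n m \<Longrightarrow> proj f = proj f' \<Longrightarrow>
      x \<in> carrier (M n) \<Longrightarrow> act n m f x = act n m f' x"
  shows "factors_through_FI M act"
proof -
  define lift where "lift n m F = (SOME f. f \<in> FIh n m \<and> proj f = F)" for n m F
  define actN where "actN n m F = act n m (lift n m F)" for n m F
  have lift: "lift n m F \<in> FIh n m" "proj (lift n m F) = F" if "F \<in> FI n m" for n m F
    using someI_ex[of "\<lambda>f. f \<in> FIh n m \<and> proj f = F"] proj_onto_FI[OF that]
    unfolding lift_def by blast+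
  have agree: "act n m f x = actN n m (proj f) x"
    if "f \<in> FIh n m" "x \<in> carrier (M n)" for n m f x
    using fibre[OF that(1) lift(1) _ that(2)] lift(2) proj_in_FI[OF that(1)]
    unfolding actN_def by simp
  have "FI_module M actN"
    unfolding FI_module_def
  proof (intro conjI allI impI ballI)
    show "comm_group (M n)" for n
      using mod by (simp add: FIh_module_def)
  next
    fix n m F assume "F \<in> FI n m"
    then show "actN n m F \<in> hom (M n) (M m)"
      using lift mod unfolding actN_def FIh_module_def by blast
  next
    fix n x assume "x \<in> carrier (M n)"
    then show "actN n n (FI_id n) x = x"
      using agree[OF FIh_id_in_FIh] mod unfolding FIh_module_def by (simp add: proj_FIh_id)
  next
    fix n m l F G x assume F: "F \<in> FI n m" and G: "G \<in> FI m l" and x: "x \<in> carrier (M n)"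
    let ?f = "lift n m F" and ?g = "lift m l G"
    have "actN n l (FI_comp n m l F G) x = actN n l (proj (FIh_comp n m l ?f ?g)) x"
      using lift F G by (simp add: proj_FIh_comp)
    also have "\<dots> = act n l (FIh_comp n m l ?f ?g) x"
      using agree FIh_comp_in_FIh lift F G x by simp
    also have "\<dots> = actN m l G (actN n m F x)"
      using FIh_module_act_comp[OF mod lift(1)[OF F] lift(1)[OF G] x] by (simp add: actN_def)
    finally show "actN n l (FI_comp n m l F G) x = actN m l G (actN n m F x)" .
  qed
  then show ?thesis
    unfolding factors_through_FI_def using agree by blast
qed

theorem mainTheorem9:
  fixes M :: "nat \<Rightarrow> 'a monoid" and act :: "nat \<Rightarrow> nat \<Rightarrow> shat set \<Rightarrow> 'a \<Rightarrow> 'a"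
  assumes "FIh_module M act"
  shows "factors_through_FI M act \<longleftrightarrow>
         (\<forall>n. \<forall>x \<in> carrier (M n). act n n (FIh_of n n (e2 n)) x = x)"
proof
  assume "factors_through_FI M act"
  then show "\<forall>n. \<forall>x \<in> carrier (M n). act n n (FIh_of n n (e2 n)) x = x"
    by (blast intro: e2_acts_trivially_if_factors_through_FI)
next
  assume "\<forall>n. \<forall>x \<in> carrier (M n). act n n (FIh_of n n (e2 n)) x = x"
  then show "factors_through_FI M act"
    using act_eq_if_proj_eq[OF assms]
    by (intro factors_through_FI_if_act_eq_on_fibres[OF assms]) blast
qed

end
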